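(* Let $k$ be a positive integer and $n_0,\ldots,n_{k-1}$ positive integers, with indices read modulo $k$. For each $j\in\{0,\ldots,k-1\}$ let $A^{(j)}$ be a real $n_j\times n_{j+1}$ matrix, and let $A=A^{(0)}A^{(1)}\cdots A^{(k-1)}$ (an $n_0\times n_0$ matrix). If the signed digraph $G=G_{A^{(0)}\cdots A^{(k-1)}}$ is e-cycle-free, then $A$ is a $P_0$-matrix.
   Context: Indices $j$ are taken modulo $k$ (so $n_k=n_0$ and $A^{(k-1)}$ is $n_{k-1}\times n_0$). The signed digraph $G=G_{A^{(0)}\cdots A^{(k-1)}}$ has vertex set the disjoint union of sets $V_0,\ldots,V_{k-1}$ with $V_j=\{V_j^1,\ldots,V_j^{n_j}\}$; there is a directed edge from $V_j^r$ to $V_{j+1}^s$ if and only if $(A^{(j)})_{rs}\neq 0$, and this edge has sign equal to the sign of $(A^{(j)})_{rs}$; there are no other edges (when $k=1$ this means an edge from $V_0^r$ to $V_0^s$, possibly a loop, iff $(A^{(0)})_{rs}\ne 0$). Every directed cycle in $G$ has length a multiple of $k$. A directed cycle with $kr_1$ edges, of which $r_2$ are negative, is an e-cycle if $(-1)^{r_1+r_2}=1$ and an o-cycle otherwise. $G$ is e-cycle-free if it contains no e-cycle. A $P_0$-matrix is a real square matrix all of whose principal minors are nonnegative. *)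

theory Defs
  imports "Jordan_Normal_Form.Determinant" "Jordan_Normal_Form.DL_Submatrix"
begin

definition P0_matrix :: "real mat \<Rightarrow> bool" where
  "P0_matrix A \<longleftrightarrow> A \<in> carrier_mat (dim_row A) (dim_row A) \<and>
     (\<forall>I. I \<subseteq> {0..<dim_row A} \<longrightarrow> det (submatrix A I I) \<ge> 0)"

definition cyclic_chain :: "real mat list \<Rightarrow> bool" where
  "cyclic_chain As \<longleftrightarrow> length As \<ge> 1 \<and>
     (\<forall>j < length As. dim_row (As ! j) > 0 \<and>
        dim_col (As ! j) = dim_row (As ! ((j + 1) mod length As)))"

text \<open>Vertices of the signed digraph: pairs (j, r) standing for V_j^r, j < k, r < n_j.\<close>
definition sd_vertex :: "real mat list \<Rightarrow> nat \<times> nat \<Rightarrow> bool" where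
  "sd_vertex As v \<longleftrightarrow> fst v < length As \<and> snd v < dim_row (As ! fst v)"

definition sd_weight :: "real mat list \<Rightarrow> nat \<times> nat \<Rightarrow> nat \<times> nat \<Rightarrow> real" where
  "sd_weight As v w = (As ! fst v) $$ (snd v, snd w)"

definition sd_edge :: "real mat list \<Rightarrow> nat \<times> nat \<Rightarrow> nat \<times> nat \<Rightarrow> bool" where
  "sd_edge As v w \<longleftrightarrow> sd_vertex As v \<and> sd_vertex As w \<and>
     fst w = (fst v + 1) mod length As \<and> sd_weight As v w \<noteq> 0"

definition sd_cycle :: "real mat list \<Rightarrow> (nat \<times> nat) list \<Rightarrow> bool" where
  "sd_cycle As vs \<longleftrightarrow> vs \<noteq> [] \<and> distinct vs \<and>
     (\<forall>i < length vs. sd_edge As (vs ! i) (vs ! ((i + 1) mod length vs)))"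

definition sd_neg_edges :: "real mat list \<Rightarrow> (nat \<times> nat) list \<Rightarrow> nat" where
  "sd_neg_edges As vs = card {i. i < length vs \<and>
      sd_weight As (vs ! i) (vs ! ((i + 1) mod length vs)) < 0}"

text \<open>e-cycle: k r1 edges, r2 negative, (-1)^(r1+r2) = 1.\<close>
definition e_cycle :: "real mat list \<Rightarrow> (nat \<times> nat) list \<Rightarrow> bool" where
  "e_cycle As vs \<longleftrightarrow> sd_cycle As vs \<and>
     (-1::int) ^ (length vs div length As + sd_neg_edges As vs) = 1"

definition e_cycle_free :: "real mat list \<Rightarrow> bool" where
  "e_cycle_free As \<longleftrightarrow> \<not> (\<exists>vs. e_cycle As vs)"

end

(* For I a set of row indices, the principal submatrix A[I,I] is again a cyclic product
   B_0 ... B_(k-1): restrict the rows of A^(0) and the columns of A^(k-1) to I. The signed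
   digraph of the B_j embeds into G, so it is e-cycle-free too, and it suffices to prove
   det (B_0 ... B_(k-1)) >= 0.

   Let M be the block matrix with blocks -B_j in positions (j, j+1 mod k), identity blocks on
   the diagonal except a zero block in position (0, 0), and zero blocks elsewhere. Taking Schur
   complements of the identity blocks one at a time gives det (B_0 ... B_(k-1)) = (-1)^|I| det M.
   In the Leibniz expansion of (-1)^|I| det M every permutation splits into cycles. A cycle with
   nonzero product is either a fixed point in an identity block, contributing 1, or it runs
   through the blocks cyclically and is a directed cycle of the signed digraph with k r_1 edges,
   r_2 of them negative, which visits block 0 exactly r_1 times. Such a cycle contributes
   -(-1)^(r_1 + r_2) times a positive number, and this is nonnegative because the digraph has
   no e-cycles. So every Leibniz term of (-1)^|I| det M is nonnegative. *)

theory Submission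
  imports Defs "HOL-Combinatorics.Cycles"
begin

section \<open>Leibniz terms via cycle decomposition\<close>

lemma sign_cycle_of_list:
  "distinct cs \<Longrightarrow> sign (cycle_of_list cs) = (-1) ^ (length cs - 1)"
proof (induction cs rule: cycle_of_list.induct)
  case (1 i j cs)
  have "sign (cycle_of_list (i # j # cs)) = sign (transpose i j) * sign (cycle_of_list (j # cs))"
    by (simp add: sign_compose permutation_swap_id permutation_of_cycle)
  also have "\<dots> = - ((-1) ^ (length (j # cs) - 1))"
    using 1 by (simp add: sign_swap_id)
  finally show ?case by (simp add: o_def)
qed auto

lemma support_nth_step:
  assumes "permutation p" and "i < least_power p a"
  shows "p (support p a ! i) = support p a ! ((i + 1) mod least_power p a)"
proof (cases "i + 1 = least_power p a")
  case True
  then have "p ((p ^^ i) a) = a"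
    using least_power_of_permutation(1)[OF assms(1)] by (metis funpow.simps(2) o_apply Suc_eq_plus1)
  with True assms(2) show ?thesis by simp
qed (use assms(2) in simp)

lemma prod_set_distinct_nth:
  "distinct cs \<Longrightarrow> (\<Prod>x\<in>set cs. f x) = (\<Prod>i<length cs. f (cs ! i))"
proof -
  assume "distinct cs"
  then have "bij_betw ((!) cs) {..<length cs} (set cs)"
    by (intro bij_betw_nth) auto
  then show ?thesis by (simp add: prod.reindex_bij_betw)
qed

lemma card_filter_set_distinct:
  "distinct cs \<Longrightarrow> card {x \<in> set cs. g x} = card {i. i < length cs \<and> g (cs ! i)}"
  using distinct_length_filter[of cs g] length_filter_conv_card[of g cs]
  by (simp add: Collect_conj_eq Int_commute)

lemma permutes_split_cycle:
  assumes p: "p permutes S" and S: "finite S" and a: "a \<in> S"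
  shows "\<exists>c q. distinct c \<and> a \<in> set c \<and> set c \<subseteq> S \<and>
    q permutes (S - set c) \<and> (\<forall>x\<in>S - set c. q x = p x) \<and>
    (\<forall>i<length c. p (c ! i) = c ! ((i + 1) mod length c)) \<and>
    sign p = (-1) ^ (length c - 1) * sign q"
proof -
  have perm: "permutation p" using p S permutation_permutes by blast
  define c where "c = support p a"
  define q where "q y = (if y \<in> S - set c then p y else y)" for y
  have dc: "distinct c" unfolding c_def using cycle_of_permutation[OF perm] .
  have c_pos: "0 < length c"
    unfolding c_def using least_power_of_permutation(2)[OF perm] by simp
  then have "c ! 0 = a" unfolding c_def by simp
  with c_pos have ac: "a \<in> set c" by (metis nth_mem)
  have cS: "set c \<subseteq> S"
    unfolding c_def using permutes_in_image[OF permutes_funpow[OF p]] a by auto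
  have q: "q permutes (S - set c)"
    unfolding q_def c_def using semidecomposition[OF p S] .
  have pq: "p = cycle_of_list c \<circ> q"
  proof
    fix y
    show "p y = (cycle_of_list c \<circ> q) y"
    proof (cases "y \<in> set c")
      case True
      then have "q y = y" unfolding q_def by simp
      then show ?thesis using cycle_restrict[OF perm, of y a] True unfolding c_def by simp
    next
      case nc: False
      show ?thesis
      proof (cases "y \<in> S")
        case True
        then have yT: "y \<in> S - set c" using nc by simp
        then have "q y \<notin> set c" using q permutes_in_image by (metis Diff_iff)
        then show ?thesis using yT q_def by (simp add: id_outside_supp)
      next
        case False
        then have "p y = y" "q y = y" using p permutes_not_in q_def by auto
        then show ?thesis using nc id_outside_supp[of y c] by simp
      qed
    qed
  qed
  have "sign p = (-1) ^ (length c - 1) * sign q"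
    using pq sign_compose[OF permutation_of_cycle, of q c] q S sign_cycle_of_list[OF dc]
    by (metis finite_Diff permutation_permutes)
  moreover have "\<forall>i<length c. p (c ! i) = c ! ((i + 1) mod length c)"
    using support_nth_step[OF perm] unfolding c_def by simp
  moreover have "\<forall>x\<in>S - set c. q x = p x"
    using q_def by simp
  ultimately show ?thesis
    using dc ac cS q by blast
qed

text \<open>The contribution of the cycle \<open>cs\<close> to a Leibniz term: its sign as a permutation
  times its entries, with the rows satisfying \<open>g\<close> negated.\<close>
definition signed_cycle_prod :: "('a \<Rightarrow> 'a \<Rightarrow> real) \<Rightarrow> ('a \<Rightarrow> bool) \<Rightarrow> 'a list \<Rightarrow> real" where
  "signed_cycle_prod X g cs = (-1) ^ (length cs - 1 + card {i. i < length cs \<and> g (cs ! i)}) *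
     (\<Prod>i<length cs. X (cs ! i) (cs ! ((i + 1) mod length cs)))"

lemma sign_prod_nonneg_by_cycles:
  fixes X :: "'a \<Rightarrow> 'a \<Rightarrow> real"
  assumes "finite S" and "p permutes S"
    and "\<And>cs. cs \<noteq> [] \<Longrightarrow> distinct cs \<Longrightarrow> set cs \<subseteq> S \<Longrightarrow>
       (\<forall>i<length cs. X (cs ! i) (cs ! ((i + 1) mod length cs)) \<noteq> 0) \<Longrightarrow>
       0 \<le> signed_cycle_prod X g cs"
  shows "0 \<le> of_int (sign p) * (-1) ^ card {x \<in> S. g x} * (\<Prod>x\<in>S. X x (p x))"
  using assms
proof (induction "card S" arbitrary: S p rule: less_induct)
  case less
  show ?case
  proof (cases "S = {}")
    case True
    then show ?thesis using less.prems(2) by (simp add: permutes_empty)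
  next
    case False
    then obtain a where a: "a \<in> S" by blast
    obtain c q where dc: "distinct c" and ac: "a \<in> set c" and cS: "set c \<subseteq> S"
      and q: "q permutes (S - set c)" and qp: "\<forall>x\<in>S - set c. q x = p x"
      and pc: "\<forall>i<length c. p (c ! i) = c ! ((i + 1) mod length c)"
      and sign: "sign p = (-1) ^ (length c - 1) * sign q"
      using permutes_split_cycle[OF less.prems(2,1) a] by blast
    define T where "T = S - set c"
    define Xc where "Xc = (\<Prod>i<length c. X (c ! i) (c ! ((i + 1) mod length c)))"
    have S_split: "S = set c \<union> T" "set c \<inter> T = {}" "finite T"
      using cS less.prems(1) unfolding T_def by auto
    have "T \<subset> S" using a ac cS unfolding T_def by blast
    then have "card T < card S" using less.prems(1) by (rule psubset_card_mono[rotated])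
    moreover have "q permutes T" using q unfolding T_def .
    ultimately have IH: "0 \<le> of_int (sign q) * (-1) ^ card {x \<in> T. g x} * (\<Prod>x\<in>T. X x (q x))"
    proof (rule less.hyps[OF _ S_split(3)])
      fix cs assume "cs \<noteq> []" "distinct cs" "set cs \<subseteq> T"
        "\<forall>i<length cs. X (cs ! i) (cs ! ((i + 1) mod length cs)) \<noteq> 0"
      then show "0 \<le> signed_cycle_prod X g cs" using less.prems(3) unfolding T_def by blast
    qed
    have "(\<Prod>x\<in>S. X x (p x)) = (\<Prod>x\<in>set c. X x (p x)) * (\<Prod>x\<in>T. X x (p x))"
      using S_split by (simp add: prod.union_disjoint)
    also have "(\<Prod>x\<in>set c. X x (p x)) = Xc"
      unfolding Xc_def prod_set_distinct_nth[OF dc] using pc by simp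
    also have "(\<Prod>x\<in>T. X x (p x)) = (\<Prod>x\<in>T. X x (q x))"
      using qp unfolding T_def by simp
    finally have prod: "(\<Prod>x\<in>S. X x (p x)) = Xc * (\<Prod>x\<in>T. X x (q x))" .
    have "{x \<in> S. g x} = {x \<in> set c. g x} \<union> {x \<in> T. g x}" using S_split(1) by blast
    then have "card {x \<in> S. g x} = card {x \<in> set c. g x} + card {x \<in> T. g x}"
      using S_split(2,3) by (simp add: card_Un_disjoint disjoint_iff)
    then have card: "card {x \<in> S. g x} = card {i. i < length c \<and> g (c ! i)} + card {x \<in> T. g x}"
      using card_filter_set_distinct[OF dc] by simp
    have split: "of_int (sign p) * (-1) ^ card {x \<in> S. g x} * (\<Prod>x\<in>S. X x (p x)) =
        signed_cycle_prod X g c * (of_int (sign q) * (-1) ^ card {x \<in> T. g x} * (\<Prod>x\<in>T. X x (q x)))"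
      unfolding signed_cycle_prod_def sign prod card Xc_def by (simp add: power_add mult_ac)
    show ?thesis
    proof (cases "\<forall>i<length c. X (c ! i) (c ! ((i + 1) mod length c)) \<noteq> 0")
      case True
      have "c \<noteq> []" using ac by auto
      then have "0 \<le> signed_cycle_prod X g c"
        using less.prems(3)[OF _ dc cS True] by simp
      then show ?thesis unfolding split using IH by simp
    next
      case False
      then have "Xc = 0" unfolding Xc_def by auto
      then show ?thesis unfolding prod by simp
    qed
  qed
qed

lemma det_nonneg_by_cycles:
  assumes M: "M \<in> carrier_mat n n"
    and "\<And>cs. cs \<noteq> [] \<Longrightarrow> distinct cs \<Longrightarrow> set cs \<subseteq> {0..<n} \<Longrightarrow>
       (\<forall>i<length cs. M $$ (cs ! i, cs ! ((i + 1) mod length cs)) \<noteq> 0) \<Longrightarrow>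
       0 \<le> signed_cycle_prod (\<lambda>x y. M $$ (x, y)) g cs"
  shows "0 \<le> (-1) ^ card {x \<in> {0..<n}. g x} * det M"
proof -
  have "(-1) ^ card {x \<in> {0..<n}. g x} * det M = (\<Sum>p | p permutes {0..<n}.
      of_int (sign p) * (-1) ^ card {x \<in> {0..<n}. g x} * (\<Prod>x\<in>{0..<n}. M $$ (x, p x)))"
    unfolding det_def'[OF M] by (simp add: sum_distrib_left mult_ac)
  also have "\<dots> \<ge> 0"
    using sign_prod_nonneg_by_cycles[of "{0..<n}" _ "\<lambda>x y. M $$ (x, y)" g] assms(2)
    by (intro sum_nonneg) simp
  finally show ?thesis .
qed

section \<open>The cyclic block matrix\<close>

fun block_pos :: "nat list \<Rightarrow> nat \<Rightarrow> nat \<times> nat" where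
  "block_pos [] i = (0, i)"
| "block_pos (d # ds) i =
    (if i < d then (0, i) else apfst Suc (block_pos ds (i - d)))"

lemma block_pos_bound:
  "i < sum_list ds \<Longrightarrow> fst (block_pos ds i) < length ds \<and> snd (block_pos ds i) < ds ! fst (block_pos ds i)"
  by (induction ds arbitrary: i) auto

lemma block_pos_inj:
  "i < sum_list ds \<Longrightarrow> j < sum_list ds \<Longrightarrow> block_pos ds i = block_pos ds j \<Longrightarrow> i = j"
proof (induction ds arbitrary: i j)
  case (Cons d ds)
  show ?case
  proof (cases "i < d")
    case True
    then show ?thesis using Cons.prems by (auto split: if_splits simp: prod_eq_iff)
  next
    case False
    then have jd: "\<not> j < d" using Cons.prems by (auto split: if_splits simp: prod_eq_iff)
    have "block_pos ds (i - d) = block_pos ds (j - d)"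
      using Cons.prems False jd by (auto simp: prod_eq_iff)
    then have "i - d = j - d" using Cons.IH[of "i - d" "j - d"] Cons.prems False jd by auto
    then show ?thesis using False jd by simp
  qed
qed simp

lemma block_pos_append_less: "i < sum_list ds \<Longrightarrow> block_pos (ds @ [d]) i = block_pos ds i"
  by (induction ds arbitrary: i) auto

lemma block_pos_append_last: "i < d \<Longrightarrow> block_pos (ds @ [d]) (sum_list ds + i) = (length ds, i)"
  by (induction ds) auto

lemma card_block_pos_0:
  "card {i. i < sum_list (d # ds) \<and> fst (block_pos (d # ds) i) = 0} = d"
proof -
  have "{i. i < sum_list (d # ds) \<and> fst (block_pos (d # ds) i) = 0} = {..<d}"
    by auto
  then show ?thesis by simp
qed

lemma det_four_block_mat_schur_one:
  fixes W Y Z :: "'a :: idom mat"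
  assumes W: "W \<in> carrier_mat n n" and Y: "Y \<in> carrier_mat n m" and Z: "Z \<in> carrier_mat m n"
  shows "det (four_block_mat (W + Y * Z) Y Z (1\<^sub>m m)) = det W"
proof -
  let ?M = "four_block_mat (W + Y * Z) Y Z (1\<^sub>m m)"
  let ?E = "four_block_mat (1\<^sub>m n) (- Y) (0\<^sub>m m n) (1\<^sub>m m)"
  have WYZ: "W + Y * Z \<in> carrier_mat n n" using W Y Z by simp
  have "?E * ?M = four_block_mat (1\<^sub>m n * (W + Y * Z) + (- Y) * Z) (1\<^sub>m n * Y + (- Y) * 1\<^sub>m m)
      (0\<^sub>m m n * (W + Y * Z) + 1\<^sub>m m * Z) (0\<^sub>m m n * Y + 1\<^sub>m m * 1\<^sub>m m)"
    using W Y Z WYZ by (intro mult_four_block_mat) auto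
  also have "\<dots> = four_block_mat W (0\<^sub>m n m) Z (1\<^sub>m m)"
    using W Y Z WYZ by (intro cong_four_block_mat eq_matI) (auto simp: algebra_simps)
  finally have EM: "?E * ?M = four_block_mat W (0\<^sub>m n m) Z (1\<^sub>m m)" .
  have "det (?E * ?M) = det ?E * det ?M"
    using W Y Z WYZ by (intro det_mult[of _ "n + m"]) auto
  moreover have "det ?E = 1"
    using Y by (subst det_four_block_mat_lower_left_zero[of _ n _ m]) auto
  moreover have "det (?E * ?M) = det W"
    unfolding EM using W Z by (subst det_four_block_mat_upper_right_zero[of _ n _ m]) auto
  ultimately show ?thesis by simp
qed

lemma det_uminus_mat:
  fixes B :: "'a :: comm_ring_1 mat"
  assumes "B \<in> carrier_mat n n"
  shows "det (- B) = (-1) ^ n * det B"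
proof -
  have "- B = (-1) \<cdot>\<^sub>m B" using assms by (intro eq_matI) auto
  then show ?thesis using assms by simp
qed

definition chain_dims :: "real mat list \<Rightarrow> bool" where
  "chain_dims Xs \<longleftrightarrow> (\<forall>j. Suc j < length Xs \<longrightarrow> dim_col (Xs ! j) = dim_row (Xs ! Suc j))"

definition cyclic_dims :: "real mat list \<Rightarrow> bool" where
  "cyclic_dims Xs \<longleftrightarrow> chain_dims Xs \<and> dim_col (last Xs) = dim_row (hd Xs)"

lemma cyclic_dims_iff_nth:
  assumes "Xs \<noteq> []"
  shows "cyclic_dims Xs \<longleftrightarrow> (\<forall>j<length Xs. dim_col (Xs ! j) = dim_row (Xs ! (Suc j mod length Xs)))"
proof -
  have last: "last Xs = Xs ! (length Xs - 1)" and hd: "hd Xs = Xs ! 0"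
    using assms by (simp_all add: last_conv_nth hd_conv_nth)
  have "Suc (length Xs - 1) = length Xs" using assms by simp
  then have wrap: "j = length Xs - 1 \<and> Suc j mod length Xs = 0"
    if "j < length Xs" "\<not> Suc j < length Xs" for j
  proof -
    have "Suc j = length Xs" using that by simp
    then show ?thesis by auto
  qed
  show ?thesis
    unfolding cyclic_dims_def chain_dims_def last hd
  proof (intro iffI allI impI conjI)
    fix j assume "(\<forall>j. Suc j < length Xs \<longrightarrow> dim_col (Xs ! j) = dim_row (Xs ! Suc j)) \<and>
        dim_col (Xs ! (length Xs - 1)) = dim_row (Xs ! 0)" and "j < length Xs"
    then show "dim_col (Xs ! j) = dim_row (Xs ! (Suc j mod length Xs))"
      using wrap[of j] by (cases "Suc j < length Xs") auto
  next
    assume nth: "\<forall>j<length Xs. dim_col (Xs ! j) = dim_row (Xs ! (Suc j mod length Xs))"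
    then show "dim_col (Xs ! j) = dim_row (Xs ! Suc j)" if "Suc j < length Xs" for j
      using that by auto
    show "dim_col (Xs ! (length Xs - 1)) = dim_row (Xs ! 0)"
      using nth wrap[of "length Xs - 1"] assms by auto
  qed
qed

lemma cyclic_dimsD:
  assumes "cyclic_dims Xs" and "j < length Xs"
  shows "dim_col (Xs ! j) = dim_row (Xs ! (Suc j mod length Xs))"
proof -
  have "Xs \<noteq> []" using assms(2) by auto
  then show ?thesis using assms cyclic_dims_iff_nth by blast
qed

definition chain_prod :: "real mat list \<Rightarrow> real mat" where
  "chain_prod Xs = foldr (*) (butlast Xs) (last Xs)"

definition cyclic_block_mat :: "real mat list \<Rightarrow> real mat" where
  "cyclic_block_mat Bs = (let ds = map dim_row Bs in
     mat (sum_list ds) (sum_list ds) (\<lambda>(x, y).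
       case (block_pos ds x, block_pos ds y) of ((a, r), (b, s)) \<Rightarrow>
         (if x = y \<and> a \<noteq> 0 then 1 else 0) - (if b = Suc a mod length Bs then Bs ! a $$ (r, s) else 0)))"

lemma cyclic_block_mat_carrier:
  "cyclic_block_mat Bs \<in> carrier_mat (sum_list (map dim_row Bs)) (sum_list (map dim_row Bs))"
  unfolding cyclic_block_mat_def Let_def by simp

lemma cyclic_block_mat_index:
  assumes "x < sum_list (map dim_row Bs)" and "y < sum_list (map dim_row Bs)"
    and "block_pos (map dim_row Bs) x = (a, r)" and "block_pos (map dim_row Bs) y = (b, s)"
  shows "cyclic_block_mat Bs $$ (x, y) =
    (if x = y \<and> a \<noteq> 0 then 1 else 0) - (if b = Suc a mod length Bs then Bs ! a $$ (r, s) else 0)"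
  using assms unfolding cyclic_block_mat_def Let_def by simp

lemma cyclic_block_mat_single: "dim_col B = dim_row B \<Longrightarrow> cyclic_block_mat [B] = - B"
  by (intro eq_matI) (auto simp: cyclic_block_mat_def Let_def)

definition last_block_col :: "real mat list \<Rightarrow> real mat \<Rightarrow> real mat \<Rightarrow> real mat" where
  "last_block_col Bs B C = (let ds = map dim_row (Bs @ [B]) in
     mat (sum_list ds) (dim_row C) (\<lambda>(x, j).
       case block_pos ds x of (a, r) \<Rightarrow> if a = length Bs then - B $$ (r, j) else 0))"

definition last_block_row :: "real mat list \<Rightarrow> real mat \<Rightarrow> real mat \<Rightarrow> real mat" where
  "last_block_row Bs B C = (let ds = map dim_row (Bs @ [B]) in
     mat (dim_row C) (sum_list ds) (\<lambda>(i, y).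
       case block_pos ds y of (b, s) \<Rightarrow> if b = 0 then - C $$ (i, s) else 0))"

lemma cyclic_dims_snoc2D:
  assumes "cyclic_dims (Bs @ [B, C])"
  shows "dim_col B = dim_row C" and "dim_col C = dim_row (hd (Bs @ [B]))"
  using assms unfolding cyclic_dims_def chain_dims_def
  by (auto simp: nth_append dest: spec[of _ "length Bs"]) (cases Bs; simp)

lemma last_block_col_mult_row_index:
  assumes ch: "cyclic_dims (Bs @ [B, C])"
    and x: "x < sum_list (map dim_row (Bs @ [B]))" and y: "y < sum_list (map dim_row (Bs @ [B]))"
    and a: "block_pos (map dim_row (Bs @ [B])) x = (a, r)"
    and b: "block_pos (map dim_row (Bs @ [B])) y = (b, s)"
  shows "(last_block_col Bs B C * last_block_row Bs B C) $$ (x, y) =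
    (if a = length Bs \<and> b = 0 then (B * C) $$ (r, s) else 0)"
proof -
  let ?Y = "last_block_col Bs B C" and ?Z = "last_block_row Bs B C"
  have e: "(?Y * ?Z) $$ (x, y) = (\<Sum>l<dim_row C. ?Y $$ (x, l) * ?Z $$ (l, y))"
    using x y by (simp add: last_block_col_def last_block_row_def Let_def scalar_prod_def atLeast0LessThan)
  show ?thesis
  proof (cases "a = length Bs \<and> b = 0")
    case True
    have "r < dim_row B" using block_pos_bound[OF x] a True by (simp add: nth_append)
    moreover have "s < dim_col C"
      using block_pos_bound[OF y] b True cyclic_dims_snoc2D(2)[OF ch] by (cases Bs) auto
    moreover have "(\<Sum>l<dim_row C. ?Y $$ (x, l) * ?Z $$ (l, y)) = (\<Sum>l<dim_row C. B $$ (r, l) * C $$ (l, s))"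
      using x y a b True by (intro sum.cong) (auto simp: last_block_col_def last_block_row_def Let_def)
    ultimately show ?thesis
      using e True cyclic_dims_snoc2D(1)[OF ch] by (simp add: scalar_prod_def atLeast0LessThan)
  next
    case False
    have "(\<Sum>l<dim_row C. ?Y $$ (x, l) * ?Z $$ (l, y)) = 0"
      using x y a b False by (intro sum.neutral) (auto simp: last_block_col_def last_block_row_def Let_def)
    then show ?thesis using e False by auto
  qed
qed

lemma block_pos_snoc_ge:
  assumes "sum_list ds \<le> x" and "x < sum_list ds + d"
  shows "block_pos (ds @ [d]) x = (length ds, x - sum_list ds)"
  using block_pos_append_last[of "x - sum_list ds" d ds] assms by simp

lemma cyclic_block_mat_snoc2_upper_left:
  assumes ch: "cyclic_dims (Bs @ [B, C])"
    and x: "x < sum_list (map dim_row (Bs @ [B]))" and y: "y < sum_list (map dim_row (Bs @ [B]))"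
  shows "cyclic_block_mat (Bs @ [B, C]) $$ (x, y) =
    cyclic_block_mat (Bs @ [B * C]) $$ (x, y) + (last_block_col Bs B C * last_block_row Bs B C) $$ (x, y)"
proof -
  let ?ds = "map dim_row (Bs @ [B])" and ?t = "length Bs"
  obtain a r where ar: "block_pos ?ds x = (a, r)" by (cases "block_pos ?ds x")
  obtain b s where bs: "block_pos ?ds y = (b, s)" by (cases "block_pos ?ds y")
  have ab: "a \<le> ?t" "b \<le> ?t" using block_pos_bound[OF x] block_pos_bound[OF y] ar bs by auto
  have "cyclic_block_mat (Bs @ [B, C]) $$ (x, y) = (if x = y \<and> a \<noteq> 0 then 1 else 0) -
      (if b = Suc a mod Suc (Suc ?t) then (Bs @ [B, C]) ! a $$ (r, s) else 0)"
    using x y block_pos_append_less[OF x, of "dim_row C"] block_pos_append_less[OF y, of "dim_row C"] ar bs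
    by (subst cyclic_block_mat_index[of _ _ _ a r b s]) auto
  moreover have "cyclic_block_mat (Bs @ [B * C]) $$ (x, y) = (if x = y \<and> a \<noteq> 0 then 1 else 0) -
      (if b = Suc a mod Suc ?t then (Bs @ [B * C]) ! a $$ (r, s) else 0)"
    using x y ar bs by (subst cyclic_block_mat_index[of _ _ _ a r b s]) auto
  ultimately show ?thesis
    using last_block_col_mult_row_index[OF ch x y ar bs] ab
    by (cases "a = ?t") (auto simp: nth_append)
qed

lemma cyclic_block_mat_snoc2_upper_right:
  assumes x: "x < sum_list (map dim_row (Bs @ [B]))"
    and y: "sum_list (map dim_row (Bs @ [B])) \<le> y" "y < sum_list (map dim_row (Bs @ [B])) + dim_row C"
  shows "cyclic_block_mat (Bs @ [B, C]) $$ (x, y) =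
    last_block_col Bs B C $$ (x, y - sum_list (map dim_row (Bs @ [B])))"
proof -
  let ?ds = "map dim_row (Bs @ [B])" and ?t = "length Bs"
  obtain a r where ar: "block_pos ?ds x = (a, r)" by (cases "block_pos ?ds x")
  have "a \<le> ?t" using block_pos_bound[OF x] ar by auto
  then have "cyclic_block_mat (Bs @ [B, C]) $$ (x, y) = (if a = ?t then - B $$ (r, y - sum_list ?ds) else 0)"
    using x y block_pos_append_less[OF x, of "dim_row C"] block_pos_snoc_ge[OF y] ar
    by (subst cyclic_block_mat_index[of _ _ _ a r "Suc ?t" "y - sum_list ?ds"]) (auto simp: nth_append)
  then show ?thesis using x y ar by (simp add: last_block_col_def Let_def)
qed

lemma cyclic_block_mat_snoc2_lower_left:
  assumes x: "sum_list (map dim_row (Bs @ [B])) \<le> x" "x < sum_list (map dim_row (Bs @ [B])) + dim_row C"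
    and y: "y < sum_list (map dim_row (Bs @ [B]))"
  shows "cyclic_block_mat (Bs @ [B, C]) $$ (x, y) =
    last_block_row Bs B C $$ (x - sum_list (map dim_row (Bs @ [B])), y)"
proof -
  let ?ds = "map dim_row (Bs @ [B])" and ?t = "length Bs"
  obtain b s where bs: "block_pos ?ds y = (b, s)" by (cases "block_pos ?ds y")
  have "cyclic_block_mat (Bs @ [B, C]) $$ (x, y) = (if b = 0 then - C $$ (x - sum_list ?ds, s) else 0)"
    using x y block_pos_append_less[OF y, of "dim_row C"] block_pos_snoc_ge[OF x] bs
    by (subst cyclic_block_mat_index[of _ _ _ "Suc ?t" "x - sum_list ?ds" b s]) (auto simp: nth_append)
  then show ?thesis using x y bs by (simp add: last_block_row_def Let_def)
qed

lemma cyclic_block_mat_snoc2_lower_right: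
  assumes x: "sum_list (map dim_row (Bs @ [B])) \<le> x" "x < sum_list (map dim_row (Bs @ [B])) + dim_row C"
    and y: "sum_list (map dim_row (Bs @ [B])) \<le> y" "y < sum_list (map dim_row (Bs @ [B])) + dim_row C"
  shows "cyclic_block_mat (Bs @ [B, C]) $$ (x, y) =
    1\<^sub>m (dim_row C) $$ (x - sum_list (map dim_row (Bs @ [B])), y - sum_list (map dim_row (Bs @ [B])))"
  using x y block_pos_snoc_ge[OF x] block_pos_snoc_ge[OF y]
  by (subst cyclic_block_mat_index[of _ _ _ "Suc (length Bs)" _ "Suc (length Bs)"]) auto

text \<open>Eliminating the last block: \<open>cyclic_block_mat (Bs @ [B * C])\<close> is the Schur complement
  of the identity block in the lower right corner.\<close>
lemma cyclic_block_mat_snoc2: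
  assumes ch: "cyclic_dims (Bs @ [B, C])"
  shows "cyclic_block_mat (Bs @ [B, C]) = four_block_mat
    (cyclic_block_mat (Bs @ [B * C]) + last_block_col Bs B C * last_block_row Bs B C)
    (last_block_col Bs B C) (last_block_row Bs B C) (1\<^sub>m (dim_row C))"
    (is "_ = ?M")
proof (rule eq_matI)
  let ?n = "sum_list (map dim_row (Bs @ [B]))"
  have dims: "dim_row ?M = ?n + dim_row C" "dim_col ?M = ?n + dim_row C"
    using cyclic_block_mat_carrier[of "Bs @ [B * C]"]
    by (simp_all add: last_block_col_def last_block_row_def Let_def del: sum_list_append)
  then show "dim_row (cyclic_block_mat (Bs @ [B, C])) = dim_row ?M"
    "dim_col (cyclic_block_mat (Bs @ [B, C])) = dim_col ?M"
    using cyclic_block_mat_carrier[of "Bs @ [B, C]"] by auto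
  fix x y assume "x < dim_row ?M" "y < dim_col ?M"
  then have x: "x < ?n + dim_row C" and y: "y < ?n + dim_row C" using dims by auto
  show "cyclic_block_mat (Bs @ [B, C]) $$ (x, y) = ?M $$ (x, y)"
    using x y cyclic_block_mat_carrier[of "Bs @ [B * C]"]
      cyclic_block_mat_snoc2_upper_left[OF ch, of x y] cyclic_block_mat_snoc2_upper_right[of x _ _ y C]
      cyclic_block_mat_snoc2_lower_left[of _ _ x C y] cyclic_block_mat_snoc2_lower_right[of _ _ x C y]
    by (simp add: last_block_col_def last_block_row_def Let_def not_less del: sum_list_append)
qed

lemma cyclic_dims_merge_last:
  assumes ch: "cyclic_dims (Cs @ [B, C])"
  shows "cyclic_dims (Cs @ [B * C])"
  unfolding cyclic_dims_def chain_dims_def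
proof (intro conjI allI impI)
  fix j assume j: "Suc j < length (Cs @ [B * C])"
  have "dim_col ((Cs @ [B, C]) ! j) = dim_row ((Cs @ [B, C]) ! Suc j)"
    using ch j unfolding cyclic_dims_def chain_dims_def by simp
  moreover have "Suc j < length Cs \<or> Suc j = length Cs" using j by auto
  ultimately show "dim_col ((Cs @ [B * C]) ! j) = dim_row ((Cs @ [B * C]) ! Suc j)"
    by (auto simp: nth_append)
next
  show "dim_col (last (Cs @ [B * C])) = dim_row (hd (Cs @ [B * C]))"
    using cyclic_dims_snoc2D(2)[OF ch] by (cases Cs) auto
qed

lemma chain_prod_merge_last: "chain_prod (Cs @ [B * C]) = chain_prod (Cs @ [B, C])"
  by (simp add: chain_prod_def butlast_append)

lemma det_cyclic_block_mat:
  "cyclic_dims Bs \<Longrightarrow> Bs \<noteq> [] \<Longrightarrow>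
   det (cyclic_block_mat Bs) = (-1) ^ dim_row (hd Bs) * det (chain_prod Bs)"
proof (induction "length Bs" arbitrary: Bs rule: less_induct)
  case less
  obtain Bs' C where BsC: "Bs = Bs' @ [C]" using less.prems(2) rev_exhaust by blast
  show ?case
  proof (cases "Bs' = []")
    case True
    have C: "Bs = [C]" using BsC True by simp
    have sq: "dim_col C = dim_row C" using less.prems(1) unfolding C cyclic_dims_def by simp
    have "C \<in> carrier_mat (dim_row C) (dim_row C)" using sq by (intro carrier_matI) auto
    from det_uminus_mat[OF this] show ?thesis
      unfolding C chain_prod_def cyclic_block_mat_single[OF sq] by simp
  next
    case False
    then obtain Cs B where "Bs' = Cs @ [B]" using rev_exhaust by blast
    then have Bs: "Bs = Cs @ [B, C]" using BsC by simp
    have ch: "cyclic_dims (Cs @ [B, C])" using less.prems(1) Bs by simp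
    let ?n = "sum_list (map dim_row (Cs @ [B]))"
    have W: "cyclic_block_mat (Cs @ [B * C]) \<in> carrier_mat ?n ?n"
      using cyclic_block_mat_carrier[of "Cs @ [B * C]"] by simp
    have Y: "last_block_col Cs B C \<in> carrier_mat ?n (dim_row C)"
      unfolding last_block_col_def Let_def by simp
    have Z: "last_block_row Cs B C \<in> carrier_mat (dim_row C) ?n"
      unfolding last_block_row_def Let_def by simp
    have "det (cyclic_block_mat Bs) = det (cyclic_block_mat (Cs @ [B * C]))"
      unfolding Bs cyclic_block_mat_snoc2[OF ch] by (rule det_four_block_mat_schur_one[OF W Y Z])
    also have "\<dots> = (-1) ^ dim_row (hd (Cs @ [B * C])) * det (chain_prod (Cs @ [B * C]))"
      using less.hyps[of "Cs @ [B * C]"] Bs cyclic_dims_merge_last[OF ch] by simp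
    also have "dim_row (hd (Cs @ [B * C])) = dim_row (hd Bs)" using Bs by (cases Cs) auto
    finally show ?thesis by (simp only: Bs chain_prod_merge_last)
  qed
qed

section \<open>Principal submatrices of cyclic products\<close>

lemma submatrix_UNIV: "submatrix X UNIV UNIV = X"
  by (intro eq_matI) (auto simp: submatrix_def pick_UNIV)

lemma submatrix_mult:
  assumes "dim_col X = dim_row Y"
  shows "submatrix (X * Y) I J = submatrix X I UNIV * submatrix Y UNIV J"
proof (rule eq_matI)
  fix i j
  assume "i < dim_row (submatrix X I UNIV * submatrix Y UNIV J)"
    and "j < dim_col (submatrix X I UNIV * submatrix Y UNIV J)"
  then have i: "i < card {i. i < dim_row X \<and> i \<in> I}" and j: "j < card {j. j < dim_col Y \<and> j \<in> J}"
    by (simp_all add: submatrix_def)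
  then show "submatrix (X * Y) I J $$ (i, j) = (submatrix X I UNIV * submatrix Y UNIV J) $$ (i, j)"
    using pick_le[OF i] pick_le[OF j] assms
    by (simp add: submatrix_def scalar_prod_def atLeast0LessThan pick_UNIV)
qed (simp_all add: submatrix_def)

lemma chain_prod_Cons: "Xs \<noteq> [] \<Longrightarrow> chain_prod (X # Xs) = X * chain_prod Xs"
  by (simp add: chain_prod_def)

lemma dim_row_chain_prod: "Xs \<noteq> [] \<Longrightarrow> dim_row (chain_prod Xs) = dim_row (hd Xs)"
  by (induction Xs rule: induct_list012) (simp_all add: chain_prod_def)

lemma dim_col_chain_prod: "Xs \<noteq> [] \<Longrightarrow> dim_col (chain_prod Xs) = dim_col (last Xs)"
  by (induction Xs rule: induct_list012) (simp_all add: chain_prod_def)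

lemma foldr_mult_one_mat:
  "Xs \<noteq> [] \<Longrightarrow> dim_col (last Xs) = n \<Longrightarrow> foldr (*) Xs (1\<^sub>m n) = chain_prod Xs"
  by (induction Xs rule: induct_list012) (auto simp: chain_prod_def)

definition restrict_ends :: "real mat list \<Rightarrow> nat set \<Rightarrow> nat set \<Rightarrow> real mat list" where
  "restrict_ends Xs I J = map (\<lambda>a. submatrix (Xs ! a)
     (if a = 0 then I else UNIV) (if Suc a = length Xs then J else UNIV)) [0..<length Xs]"

lemma length_restrict_ends [simp]: "length (restrict_ends Xs I J) = length Xs"
  by (simp add: restrict_ends_def)

lemma restrict_ends_eq_Nil_iff [simp]: "restrict_ends Xs I J = [] \<longleftrightarrow> Xs = []"
  by (simp add: restrict_ends_def)

lemma nth_restrict_ends: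
  "a < length Xs \<Longrightarrow> restrict_ends Xs I J ! a =
     submatrix (Xs ! a) (if a = 0 then I else UNIV) (if Suc a = length Xs then J else UNIV)"
  by (simp add: restrict_ends_def)

lemma restrict_ends_Cons2:
  "restrict_ends (X # Y # Ys) I J = submatrix X I UNIV # restrict_ends (Y # Ys) UNIV J"
  by (rule nth_equalityI) (auto simp: nth_restrict_ends nth_Cons' submatrix_UNIV)

lemma submatrix_chain_prod:
  "chain_dims Xs \<Longrightarrow> Xs \<noteq> [] \<Longrightarrow> submatrix (chain_prod Xs) I J = chain_prod (restrict_ends Xs I J)"
proof (induction Xs arbitrary: I rule: induct_list012)
  case (2 X)
  then show ?case by (simp add: chain_prod_def restrict_ends_def)
next
  case (3 X Y Ys)
  have dims: "dim_col X = dim_row (chain_prod (Y # Ys))"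
    using "3.prems"(1) dim_row_chain_prod[of "Y # Ys"] unfolding chain_dims_def by fastforce
  have "chain_dims (Y # Ys)"
    using "3.prems"(1) unfolding chain_dims_def by fastforce
  then have IH: "submatrix (chain_prod (Y # Ys)) UNIV J = chain_prod (restrict_ends (Y # Ys) UNIV J)"
    using "3.IH"(2) by blast
  show ?case
    unfolding restrict_ends_Cons2 chain_prod_Cons[OF list.distinct(2)] submatrix_mult[OF dims]
    by (simp add: IH submatrix_UNIV chain_prod_Cons)
qed simp

lemma cyclic_chainD:
  "cyclic_chain As \<Longrightarrow> j < length As \<Longrightarrow> dim_col (As ! j) = dim_row (As ! ((j + 1) mod length As))"
  unfolding cyclic_chain_def by blast

lemma cyclic_chain_cyclic_dims: "cyclic_chain As \<Longrightarrow> cyclic_dims As"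
  unfolding cyclic_chain_def by (subst cyclic_dims_iff_nth) auto

lemma pick_eq_iff:
  assumes "r < card I" and "s < card I"
  shows "pick I r = pick I s \<longleftrightarrow> r = s"
  using pick_mono_le[OF assms(1), of s] pick_mono_le[OF assms(2), of r]
  by (cases r s rule: linorder_cases) auto

lemma
  assumes ch: "cyclic_chain As" and I: "I \<subseteq> {0..<dim_row (As ! 0)}" and a: "a < length As"
  shows dim_row_restrict_ends: "dim_row (restrict_ends As I I ! a) = (if a = 0 then card I else dim_row (As ! a))"
    and dim_col_restrict_ends:
      "dim_col (restrict_ends As I I ! a) = (if Suc a = length As then card I else dim_col (As ! a))"
proof -
  have "Suc a = length As \<Longrightarrow> dim_col (As ! a) = dim_row (As ! 0)"
    using cyclic_chainD[OF ch a] by simp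
  moreover have "{i. i < dim_row (As ! 0) \<and> i \<in> I} = I" using I by auto
  ultimately show "dim_row (restrict_ends As I I ! a) = (if a = 0 then card I else dim_row (As ! a))"
    "dim_col (restrict_ends As I I ! a) = (if Suc a = length As then card I else dim_col (As ! a))"
    using a by (simp_all add: nth_restrict_ends dim_submatrix)
qed

lemma index_restrict_ends:
  assumes "a < length Xs" "r < dim_row (restrict_ends Xs I J ! a)" "s < dim_col (restrict_ends Xs I J ! a)"
  shows "restrict_ends Xs I J ! a $$ (r, s) =
    Xs ! a $$ (if a = 0 then pick I r else r, if Suc a = length Xs then pick J s else s)"
  using assms by (simp add: nth_restrict_ends submatrix_def pick_UNIV)

lemma cyclic_dims_restrict_ends:
  assumes ch: "cyclic_chain As" and I: "I \<subseteq> {0..<dim_row (As ! 0)}"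
  shows "cyclic_dims (restrict_ends As I I)"
proof -
  have ne: "As \<noteq> []" using ch unfolding cyclic_chain_def by auto
  moreover have "dim_col (restrict_ends As I I ! j) = dim_row (restrict_ends As I I ! (Suc j mod length As))"
    if j: "j < length As" for j
  proof (cases "Suc j = length As")
    case False
    then have "Suc j mod length As = Suc j" using j by simp
    then show ?thesis
      using False j cyclic_chainD[OF ch j] dim_row_restrict_ends[OF ch I] dim_col_restrict_ends[OF ch I j]
      by simp
  qed (use ne dim_row_restrict_ends[OF ch I, of 0] dim_col_restrict_ends[OF ch I j] in simp)
  ultimately show ?thesis by (simp add: cyclic_dims_iff_nth)
qed

lemma e_cycle_free_embedding:
  assumes free: "e_cycle_free As" and len: "length Bs = length As"
    and vertex: "\<And>v. sd_vertex Bs v \<Longrightarrow> sd_vertex As (f v) \<and> fst (f v) = fst v"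
    and inj: "inj_on f (Collect (sd_vertex Bs))"
    and weight: "\<And>v w. sd_edge Bs v w \<Longrightarrow> sd_weight As (f v) (f w) = sd_weight Bs v w"
  shows "e_cycle_free Bs"
  unfolding e_cycle_free_def
proof
  assume "\<exists>vs. e_cycle Bs vs"
  then obtain vs where cyc: "sd_cycle Bs vs"
    and even: "(-1::int) ^ (length vs div length Bs + sd_neg_edges Bs vs) = 1"
    unfolding e_cycle_def by blast
  define us where "us = map f vs"
  have next_less: "(i + 1) mod length vs < length vs" if "i < length vs" for i
    using that by (intro mod_less_divisor) linarith
  have edge: "sd_edge Bs (vs ! i) (vs ! ((i + 1) mod length vs))" if "i < length vs" for i
    using cyc that unfolding sd_cycle_def by blast
  have "set vs \<subseteq> Collect (sd_vertex Bs)"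
    using edge unfolding sd_edge_def by (auto simp: set_conv_nth)
  then have "distinct us"
    using cyc inj unfolding us_def sd_cycle_def by (simp add: distinct_map inj_on_subset)
  moreover have "sd_edge As (us ! i) (us ! ((i + 1) mod length us))" if "i < length us" for i
  proof -
    have i: "i < length vs" using that unfolding us_def by simp
    note j = next_less[OF i]
    let ?v = "vs ! i" and ?w = "vs ! ((i + 1) mod length vs)"
    have "sd_vertex Bs ?v" "sd_vertex Bs ?w" "fst ?w = (fst ?v + 1) mod length Bs"
      "sd_weight Bs ?v ?w \<noteq> 0"
      using edge[OF i] unfolding sd_edge_def by blast+
    then show ?thesis
      using vertex[of ?v] vertex[of ?w] weight[OF edge[OF i]] len i j
      unfolding us_def sd_edge_def by simp
  qed
  moreover have "us \<noteq> []" using cyc unfolding sd_cycle_def us_def by simp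
  ultimately have "sd_cycle As us" unfolding sd_cycle_def by blast
  moreover have "sd_neg_edges As us = sd_neg_edges Bs vs"
    unfolding sd_neg_edges_def
  proof (intro arg_cong[where f = card] Collect_cong)
    fix i
    show "i < length us \<and> sd_weight As (us ! i) (us ! ((i + 1) mod length us)) < 0 \<longleftrightarrow>
        i < length vs \<and> sd_weight Bs (vs ! i) (vs ! ((i + 1) mod length vs)) < 0"
      using weight[OF edge[of i]] next_less[of i] unfolding us_def
      by (cases "i < length vs") simp_all
  qed
  moreover have "length us = length vs" unfolding us_def by simp
  ultimately have "e_cycle As us" using even len unfolding e_cycle_def by simp
  then show False using free unfolding e_cycle_free_def by blast
qed

lemma e_cycle_free_restrict_ends:
  assumes ch: "cyclic_chain As" and I: "I \<subseteq> {0..<dim_row (As ! 0)}" and free: "e_cycle_free As"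
  shows "e_cycle_free (restrict_ends As I I)"
proof (rule e_cycle_free_embedding[OF free length_restrict_ends])
  let ?Bs = "restrict_ends As I I" and ?k = "length As"
  define f where "f v = (fst v, if fst v = 0 then pick I (snd v) else snd v)" for v :: "nat \<times> nat"
  have cardI: "card {i. i < dim_row (As ! 0) \<and> i \<in> I} = card I"
    using I by (intro arg_cong[where f = card]) auto
  show "sd_vertex As (f v) \<and> fst (f v) = fst v" if "sd_vertex ?Bs v" for v
    using that pick_le[of "snd v" "dim_row (As ! 0)" I] cardI dim_row_restrict_ends[OF ch I]
    unfolding sd_vertex_def f_def by (auto split: if_splits simp: conj_commute)
  show "inj_on f (Collect (sd_vertex ?Bs))"
  proof (rule inj_onI)
    fix v w assume "v \<in> Collect (sd_vertex ?Bs)" "w \<in> Collect (sd_vertex ?Bs)" and f: "f v = f w"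
    then have "fst v = 0 \<Longrightarrow> snd v < card I \<and> snd w < card I" "fst v = fst w"
      using dim_row_restrict_ends[OF ch I] f unfolding sd_vertex_def f_def by auto
    then show "v = w" using f pick_eq_iff unfolding f_def by (cases "fst v = 0") (auto simp: prod_eq_iff)
  qed
  show "sd_weight As (f v) (f w) = sd_weight ?Bs v w" if "sd_edge ?Bs v w" for v w
  proof -
    have v: "fst v < ?k" "snd v < dim_row (?Bs ! fst v)" and w: "snd w < dim_row (?Bs ! fst w)"
      and fw: "fst w = Suc (fst v) mod ?k"
      using that unfolding sd_edge_def sd_vertex_def by auto
    have "dim_col (?Bs ! fst v) = dim_row (?Bs ! fst w)"
      using cyclic_dimsD[OF cyclic_dims_restrict_ends[OF ch I], of "fst v"] v(1) fw by simp
    moreover have "(fst w = 0) = (Suc (fst v) = ?k)" using fw v(1) by (auto simp: mod_Suc)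
    ultimately show ?thesis
      using index_restrict_ends[OF v(1,2), of "snd w"] w unfolding sd_weight_def f_def by simp
  qed
qed

section \<open>Cycles of the block matrix\<close>

lemma mod_add_eq_0_iff:
  fixes a i k :: nat
  assumes "0 < k"
  shows "(a + i) mod k = 0 \<longleftrightarrow> i mod k = (k - a mod k) mod k"
proof -
  have "(a + i) mod k = (a mod k + i mod k) mod k" by (simp add: mod_add_eq)
  moreover have "a mod k < k" "i mod k < k" using assms by simp_all
  ultimately show ?thesis
    by (smt (verit, best) add.assoc add.commute add_0 add_diff_cancel_left'
        less_imp_add_positive mod_add_left_eq mod_self)
qed

lemma card_mod_eq_less_mult:
  fixes k c m :: nat
  assumes "c < k"
  shows "card {i. i < m * k \<and> i mod k = c} = m"
proof (induction m)
  case (Suc m)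
  have "{i. i < Suc m * k \<and> i mod k = c} = insert (m * k + c) {i. i < m * k \<and> i mod k = c}"
  proof (intro Set.set_eqI iffI)
    fix i assume "i \<in> {i. i < Suc m * k \<and> i mod k = c}"
    then have i: "i < m * k + k" "i mod k = c" by auto
    show "i \<in> insert (m * k + c) {i. i < m * k \<and> i mod k = c}"
    proof (cases "i < m * k")
      case False
      then have "i div k = m" using i(1) by (simp add: div_nat_eqI mult.commute)
      then have "i = m * k + c" using i(2) by (metis div_mult_mod_eq)
      then show ?thesis by simp
    qed (use i in simp)
  qed (use assms in auto)
  then show ?case using Suc by simp
qed simp

lemma card_add_mod_eq_0:
  fixes a k L :: nat
  assumes "0 < k" and "k dvd L"
  shows "card {i. i < L \<and> (a + i) mod k = 0} = L div k"
proof -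
  have "L = L div k * k" using assms(2) by simp
  then have "card {i. i < L \<and> i mod k = (k - a mod k) mod k} = L div k"
    using card_mod_eq_less_mult[of "(k - a mod k) mod k" k "L div k"] assms(1) by simp
  then show ?thesis using mod_add_eq_0_iff[OF assms(1)] by simp
qed

lemma prod_eq_neg_one_power_card_neg_mult_abs:
  fixes w :: "nat \<Rightarrow> real"
  shows "(\<Prod>i<L. w i) = (-1) ^ card {i. i < L \<and> w i < 0} * (\<Prod>i<L. \<bar>w i\<bar>)"
proof -
  have "(\<Prod>i<L. w i) = (\<Prod>i<L. (if w i < 0 then -1 else 1) * \<bar>w i\<bar>)"
    by (intro prod.cong) auto
  also have "\<dots> = (\<Prod>i<L. if w i < 0 then -1 else 1) * (\<Prod>i<L. \<bar>w i\<bar>)"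
    by (simp add: prod.distrib)
  also have "(\<Prod>i<L. if w i < (0::real) then -1 else 1) = (-1) ^ card {i. i < L \<and> w i < 0}"
    by (simp add: prod.If_cases lessThan_def Collect_conj_eq[symmetric])
  finally show ?thesis .
qed

lemma sd_cycle_layers:
  assumes cyc: "sd_cycle As vs"
  shows "length As dvd length vs"
    and "card {i. i < length vs \<and> fst (vs ! i) = 0} = length vs div length As"
proof -
  let ?k = "length As" and ?L = "length vs"
  have L: "0 < ?L" using cyc unfolding sd_cycle_def by simp
  have edge: "sd_edge As (vs ! i) (vs ! ((i + 1) mod ?L))" if "i < ?L" for i
    using cyc that unfolding sd_cycle_def by blast
  have a0: "fst (vs ! 0) < ?k" using edge[OF L] unfolding sd_edge_def sd_vertex_def by simp
  then have k: "0 < ?k" by linarith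
  have layer: "fst (vs ! i) = (fst (vs ! 0) + i) mod ?k" if "i < ?L" for i
    using that
  proof (induction i)
    case (Suc i)
    then have "fst (vs ! Suc i) = Suc (fst (vs ! i)) mod ?k"
      using edge[of i] unfolding sd_edge_def by simp
    then show ?case using Suc by (simp add: mod_Suc_eq)
  qed (use a0 in simp)
  have "fst (vs ! 0) = Suc (fst (vs ! (?L - 1))) mod ?k"
    using edge[of "?L - 1"] L unfolding sd_edge_def by simp
  also have "\<dots> = (fst (vs ! 0) + ?L) mod ?k"
    using layer[of "?L - 1"] L by (simp add: mod_Suc_eq)
  finally have "(fst (vs ! 0) + ?L) mod ?k = fst (vs ! 0) mod ?k" using a0 by simp
  then have "?k dvd (fst (vs ! 0) + ?L) - fst (vs ! 0)"
    by (subst mod_eq_dvd_iff_nat[symmetric]) auto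
  then show dvd: "?k dvd ?L" by simp
  have "{i. i < ?L \<and> fst (vs ! i) = 0} = {i. i < ?L \<and> (fst (vs ! 0) + i) mod ?k = 0}"
    using layer by auto
  then show "card {i. i < ?L \<and> fst (vs ! i) = 0} = ?L div ?k"
    using card_add_mod_eq_0[OF k dvd] by simp
qed

lemma e_cycle_free_cycle_weight_prod:
  assumes free: "e_cycle_free As" and cyc: "sd_cycle As vs"
  shows "(-1) ^ (length vs div length As) *
    (\<Prod>i<length vs. sd_weight As (vs ! i) (vs ! ((i + 1) mod length vs))) \<le> 0"
proof -
  let ?r = "length vs div length As"
  let ?w = "\<lambda>i. sd_weight As (vs ! i) (vs ! ((i + 1) mod length vs))"
  have not_even: "(-1::int) ^ (?r + sd_neg_edges As vs) \<noteq> 1"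
    using free cyc unfolding e_cycle_free_def e_cycle_def by blast
  have "odd (?r + sd_neg_edges As vs)"
  proof
    assume "even (?r + sd_neg_edges As vs)"
    then have "(-1::int) ^ (?r + sd_neg_edges As vs) = 1" by simp
    with not_even show False by contradiction
  qed
  then have sign: "(-1::real) ^ (?r + sd_neg_edges As vs) = -1" by simp
  have "(\<Prod>i<length vs. ?w i) = (-1) ^ sd_neg_edges As vs * (\<Prod>i<length vs. \<bar>?w i\<bar>)"
    unfolding sd_neg_edges_def by (rule prod_eq_neg_one_power_card_neg_mult_abs)
  then have "(-1) ^ ?r * (\<Prod>i<length vs. ?w i) = - (\<Prod>i<length vs. \<bar>?w i\<bar>)"
    using sign by (simp add: power_add mult.assoc[symmetric])
  then show ?thesis by (simp add: prod_nonneg)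
qed

lemma cyclic_block_mat_cycle:
  fixes Bs :: "real mat list" and cs :: "nat list"
  defines "ds \<equiv> map dim_row Bs"
  assumes cs: "cs \<noteq> []" "distinct cs" "set cs \<subseteq> {0..<sum_list ds}"
    and nz: "\<forall>i<length cs. cyclic_block_mat Bs $$ (cs ! i, cs ! ((i + 1) mod length cs)) \<noteq> 0"
    and no_loop: "length cs = 1 \<Longrightarrow> fst (block_pos ds (cs ! 0)) = 0"
  shows "sd_cycle Bs (map (block_pos ds) cs)"
    and "i < length cs \<Longrightarrow> cyclic_block_mat Bs $$ (cs ! i, cs ! ((i + 1) mod length cs)) =
      - sd_weight Bs (block_pos ds (cs ! i)) (block_pos ds (cs ! ((i + 1) mod length cs)))"
proof -
  let ?L = "length cs" and ?vs = "map (block_pos ds) cs"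
  have next_less: "(i + 1) mod ?L < ?L" for i using cs(1) by simp
  have in_range: "cs ! i < sum_list ds" if "i < ?L" for i using cs(3) nth_mem[OF that] by auto
  have step: "fst (block_pos ds (cs ! ((i + 1) mod ?L))) = (fst (block_pos ds (cs ! i)) + 1) mod length Bs \<and>
      cyclic_block_mat Bs $$ (cs ! i, cs ! ((i + 1) mod ?L)) =
      - sd_weight Bs (block_pos ds (cs ! i)) (block_pos ds (cs ! ((i + 1) mod ?L)))"
    if i: "i < ?L" for i
  proof -
    let ?x = "cs ! i" and ?y = "cs ! ((i + 1) mod ?L)"
    obtain a r where ar: "block_pos ds ?x = (a, r)" by (cases "block_pos ds ?x")
    obtain b s where bs: "block_pos ds ?y = (b, s)" by (cases "block_pos ds ?y")
    have "a = 0" if "?x = ?y"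
    proof -
      have "i = (i + 1) mod ?L"
        using nth_eq_iff_index_eq[OF cs(2) i next_less[of i]] that by blast
      then have i_eq: "(i + 1) mod ?L = i" by (rule sym)
      have "i + 1 = ?L"
      proof (rule ccontr)
        assume "i + 1 \<noteq> ?L"
        then have "(i + 1) mod ?L = i + 1" using i by simp
        then show False using i_eq by simp
      qed
      then have "?L = 1 \<and> i = 0" using i_eq by simp
      then show ?thesis using no_loop ar by simp
    qed
    then have "cyclic_block_mat Bs $$ (?x, ?y) = - (if b = Suc a mod length Bs then Bs ! a $$ (r, s) else 0)"
      using cyclic_block_mat_index[of ?x Bs ?y a r b s] in_range[OF i] in_range[OF next_less] ar bs
      unfolding ds_def by auto
    then show ?thesis using nz i ar bs unfolding sd_weight_def by (auto split: if_splits)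
  qed
  then show "i < ?L \<Longrightarrow> cyclic_block_mat Bs $$ (cs ! i, cs ! ((i + 1) mod ?L)) =
      - sd_weight Bs (block_pos ds (cs ! i)) (block_pos ds (cs ! ((i + 1) mod ?L)))" by blast
  have "inj_on (block_pos ds) (set cs)"
  proof (rule inj_onI)
    fix x y assume "x \<in> set cs" "y \<in> set cs" "block_pos ds x = block_pos ds y"
    moreover have "x \<in> {0..<sum_list ds}" "y \<in> {0..<sum_list ds}"
      using cs(3) \<open>x \<in> set cs\<close> \<open>y \<in> set cs\<close> by (auto dest: subsetD)
    ultimately show "x = y" using block_pos_inj[of x ds y] by simp
  qed
  then have "distinct ?vs" using cs(2) by (simp add: distinct_map)
  moreover have "sd_vertex Bs (block_pos ds (cs ! i))" if "i < ?L" for i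
    using block_pos_bound[OF in_range[OF that]] unfolding sd_vertex_def ds_def by auto
  ultimately show "sd_cycle Bs ?vs"
    using cs(1) step nz next_less unfolding sd_cycle_def sd_edge_def by auto
qed

lemma signed_cycle_prod_cyclic_block_mat_nonneg:
  fixes Bs :: "real mat list" and cs :: "nat list"
  defines "ds \<equiv> map dim_row Bs"
  assumes free: "e_cycle_free Bs"
    and cs: "cs \<noteq> []" "distinct cs" "set cs \<subseteq> {0..<sum_list ds}"
    and nz: "\<forall>i<length cs. cyclic_block_mat Bs $$ (cs ! i, cs ! ((i + 1) mod length cs)) \<noteq> 0"
  shows "0 \<le> signed_cycle_prod (\<lambda>x y. cyclic_block_mat Bs $$ (x, y)) (\<lambda>x. fst (block_pos ds x) = 0) cs"
proof (cases "length cs = 1 \<and> fst (block_pos ds (cs ! 0)) \<noteq> 0")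
  case True
  let ?x = "cs ! 0"
  obtain a r where ar: "block_pos ds ?x = (a, r)" by (cases "block_pos ds ?x")
  have "?x \<in> set cs" using cs(1) by (intro nth_mem) simp
  then have x: "?x < sum_list ds" using cs(3) by auto
  then have "a < length Bs" using block_pos_bound[OF x] ar unfolding ds_def by simp
  moreover have "a \<noteq> 0" using True ar by simp
  ultimately have "Suc a mod length Bs \<noteq> a"
  proof (cases "Suc a < length Bs")
    case False
    then have "Suc a = length Bs" using \<open>a < length Bs\<close> by simp
    then show ?thesis using \<open>a \<noteq> 0\<close> by simp
  qed simp
  then have one: "cyclic_block_mat Bs $$ (?x, ?x) = 1"
    using cyclic_block_mat_index[of ?x Bs ?x a r a r] x ar True unfolding ds_def by simp
  have "\<forall>i<length cs. fst (block_pos ds (cs ! i)) \<noteq> 0" using True by simp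
  then have card0: "card {i. i < length cs \<and> fst (block_pos ds (cs ! i)) = 0} = 0" by simp
  show ?thesis unfolding signed_cycle_prod_def card0 using one True by simp
next
  case False
  let ?L = "length cs" and ?vs = "map (block_pos ds) cs"
  let ?w = "\<lambda>i. sd_weight Bs (?vs ! i) (?vs ! ((i + 1) mod ?L))"
  have cyc: "sd_cycle Bs ?vs" and entry: "\<And>i. i < ?L \<Longrightarrow>
      cyclic_block_mat Bs $$ (cs ! i, cs ! ((i + 1) mod ?L)) = - ?w i"
    using cyclic_block_mat_cycle[OF cs[unfolded ds_def] nz] False cs(1) unfolding ds_def by auto
  have "{i. i < ?L \<and> fst (?vs ! i) = 0} = {i. i < ?L \<and> fst (block_pos ds (cs ! i)) = 0}"
    by auto
  then have card: "card {i. i < ?L \<and> fst (block_pos ds (cs ! i)) = 0} = ?L div length Bs"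
    using sd_cycle_layers(2)[OF cyc] by simp
  have "(\<Prod>i<?L. cyclic_block_mat Bs $$ (cs ! i, cs ! ((i + 1) mod ?L))) = (\<Prod>i<?L. (-1) * ?w i)"
    using entry by (intro prod.cong) simp_all
  also have "\<dots> = (-1) ^ ?L * (\<Prod>i<?L. ?w i)" by (subst prod.distrib) simp
  finally have prod: "(\<Prod>i<?L. cyclic_block_mat Bs $$ (cs ! i, cs ! ((i + 1) mod ?L))) =
    (-1) ^ ?L * (\<Prod>i<?L. ?w i)" .
  have sign: "(-1::real) ^ (?L - 1 + ?L div length Bs) * (-1) ^ ?L = - ((-1) ^ (?L div length Bs))"
    using cs(1) by (cases ?L) (auto simp: power_add)
  have "signed_cycle_prod (\<lambda>x y. cyclic_block_mat Bs $$ (x, y)) (\<lambda>x. fst (block_pos ds x) = 0) cs =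
      - ((-1) ^ (?L div length Bs) * (\<Prod>i<?L. ?w i))"
    unfolding signed_cycle_prod_def card prod mult.assoc[symmetric] sign by simp
  then show ?thesis using e_cycle_free_cycle_weight_prod[OF free cyc] by simp
qed

lemma det_chain_prod_nonneg:
  assumes free: "e_cycle_free Bs" and ne: "Bs \<noteq> []" and dims: "cyclic_dims Bs"
  shows "0 \<le> det (chain_prod Bs)"
proof -
  let ?ds = "map dim_row Bs"
  have "0 \<le> (-1) ^ card {x \<in> {0..<sum_list ?ds}. fst (block_pos ?ds x) = 0} * det (cyclic_block_mat Bs)"
    using signed_cycle_prod_cyclic_block_mat_nonneg[OF free]
    by (intro det_nonneg_by_cycles[OF cyclic_block_mat_carrier]) auto
  moreover have "card {x \<in> {0..<sum_list ?ds}. fst (block_pos ?ds x) = 0} = dim_row (hd Bs)"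
    using ne card_block_pos_0[of "dim_row (hd Bs)" "map dim_row (tl Bs)"]
    by (cases Bs) (auto intro: arg_cong[where f = card] simp: conj_commute)
  ultimately show ?thesis
    unfolding det_cyclic_block_mat[OF dims ne] by (simp add: mult.assoc[symmetric] power_add[symmetric])
qed

theorem theorem1:
  fixes As :: "real mat list"
  assumes "cyclic_chain As"
    and "e_cycle_free As"
  shows "P0_matrix (foldr (*) As (1\<^sub>m (dim_row (As ! 0))))"
proof -
  let ?n = "dim_row (As ! 0)"
  have ne: "As \<noteq> []" and dims: "cyclic_dims As"
    using assms(1) cyclic_chain_cyclic_dims unfolding cyclic_chain_def by auto
  then have "dim_col (last As) = ?n" unfolding cyclic_dims_def by (simp add: hd_conv_nth)
  then have prod: "foldr (*) As (1\<^sub>m ?n) = chain_prod As" by (rule foldr_mult_one_mat[OF ne])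
  have rows: "dim_row (chain_prod As) = ?n" using dim_row_chain_prod[OF ne] ne by (simp add: hd_conv_nth)
  have cols: "dim_col (chain_prod As) = ?n" using dim_col_chain_prod[OF ne] \<open>dim_col (last As) = ?n\<close> by simp
  show ?thesis
    unfolding P0_matrix_def prod
  proof (intro conjI allI impI)
    show "chain_prod As \<in> carrier_mat (dim_row (chain_prod As)) (dim_row (chain_prod As))"
      by (intro carrier_matI) (simp_all add: rows cols)
    fix I assume "I \<subseteq> {0..<dim_row (chain_prod As)}"
    then have I: "I \<subseteq> {0..<?n}" using rows by simp
    have "submatrix (chain_prod As) I I = chain_prod (restrict_ends As I I)"
      using dims ne unfolding cyclic_dims_def by (simp add: submatrix_chain_prod)
    then show "0 \<le> det (submatrix (chain_prod As) I I)"
      using det_chain_prod_nonneg[OF e_cycle_free_restrict_ends[OF assms(1) I assms(2)] _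
          cyclic_dims_restrict_ends[OF assms(1) I]] ne
      by simp
  qed
qed

end
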